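(* Let $G>0$, $T>0$, let $F\colon\mathbb R\to\mathbb R$ be continuous and $T$-periodic, and let $a\in(0,1)$ be such that $\mathbb R\times\Gamma_a$ is a bound set for $v_\lambda$ for every $\lambda\in[0,1]$. Then there exists $b>0$ such that $\mathbb R\times(\Gamma_a\cap\Delta_b)$ is a bound set for $v_\lambda$ for all $\lambda\in[0,1]$.
   Context: For $\lambda\in[0,1]$ consider on $\mathbb R\times\Omega$, $\Omega=(-1,1)\times\mathbb R$, the system $\dot t=1$, $\dot x=p$, $\dot p=\big(G\sqrt{1-x^2}-\frac{p^2}{1-x^2}\big)x-\lambda(1-x^2)F(t)$, with right-hand side $v_\lambda(t,x,p)$ and local flow $\phi^\lambda$ (solutions are unique). For $0<a<1$ and $b>0$, $\Gamma_a=\{(x,p)\in\mathbb R^2:|x|\le a\}$ and $\Delta_b=\{(x,p)\in\mathbb R^2:|x|<1,\ b|x|+|p|\le b\}$. A closed set $E\subset\mathbb R\times\Omega$ is a bound set for $v_\lambda$ if for every $\epsilon>0$ there is no point $z\in\partial E$ with $\phi^\lambda_s(z)\in E$ for all $s\in(-\epsilon,\epsilon)$. *)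

theory Defs
  imports "HOL-Analysis.Analysis"
begin

definition Omega :: "(real \<times> real) set" where
  "Omega = {(x, p). \<bar>x\<bar> < 1}"

definition vfield :: "real \<Rightarrow> (real \<Rightarrow> real) \<Rightarrow> real \<Rightarrow> real \<times> real \<times> real \<Rightarrow> real \<times> real \<times> real" where
  "vfield G F lam z = (case z of (t, x, p) \<Rightarrow>
     (1, p, (G * sqrt (1 - x\<^sup>2) - p\<^sup>2 / (1 - x\<^sup>2)) * x - lam * (1 - x\<^sup>2) * F t))"

definition is_solution :: "real \<Rightarrow> (real \<Rightarrow> real) \<Rightarrow> real \<Rightarrow> (real \<Rightarrow> real \<times> real \<times> real) \<Rightarrow> real set \<Rightarrow> bool" where
  "is_solution G F lam gamma I \<longleftrightarrow>
     (\<forall>s\<in>I. gamma s \<in> UNIV \<times> Omega \<and>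
        (gamma has_vector_derivative vfield G F lam (gamma s)) (at s))"

text \<open>By uniqueness of solutions, the flow phi_s(z) is defined
  and in E for all s in (-eps,eps) iff some solution through z on (-eps,eps) stays in E.\<close>
definition bound_set :: "real \<Rightarrow> (real \<Rightarrow> real) \<Rightarrow> real \<Rightarrow> (real \<times> real \<times> real) set \<Rightarrow> bool" where
  "bound_set G F lam E \<longleftrightarrow>
     E \<subseteq> UNIV \<times> Omega \<and> closedin (top_of_set (UNIV \<times> Omega)) E \<and>
     (\<forall>eps>0. \<not> (\<exists>z\<in>frontier E. \<exists>gamma. gamma 0 = z \<and>
        is_solution G F lam gamma {-eps<..<eps} \<and> (\<forall>s\<in>{-eps<..<eps}. gamma s \<in> E)))"

definition Gamma_set :: "real \<Rightarrow> (real \<times> real) set" where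
  "Gamma_set a = {(x, p). \<bar>x\<bar> \<le> a}"

definition Delta_set :: "real \<Rightarrow> (real \<times> real) set" where
  "Delta_set b = {(x, p). \<bar>x\<bar> < 1 \<and> b * \<bar>x\<bar> + \<bar>p\<bar> \<le> b}"

end

theory Submission
  imports Defs
begin

text \<open>
  A boundary point of \<open>\<real> \<times> (\<Gamma>\<^sub>a \<inter> \<Delta>\<^sub>b)\<close> lies either on \<open>\<real> \<times> \<partial>\<Gamma>\<^sub>a\<close>, where the hypothesis
  applies, or on one of the edges \<open>b\<sigma>x + \<tau>p = b\<close> (\<open>\<sigma>, \<tau> = \<plusminus>1\<close>) of the rhombus \<open>\<Delta>\<^sub>b\<close>.
  A solution staying in the set would make the linear functional \<open>b\<sigma>x + \<tau>p\<close> maximal at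
  time 0, so its derivative would vanish there. On the edge, however, this derivative is
  \<open>\<sigma>\<tau> (b\<^sup>2 (1 - |x|)/(1 + |x|) + G \<surd>(1 - x\<^sup>2) |x|) - \<tau> \<lambda> (1 - x\<^sup>2) F(t)\<close>, and for \<open>|x| \<le> a\<close>
  the first term beats the bounded forcing term as soon as \<open>b\<^sup>2 (1 - a)/(1 + a) > sup |F|\<close>.
\<close>

lemma periodic_add_of_int:
  fixes F :: "real \<Rightarrow> 'a"
  assumes "\<forall>t. F (t + T) = F t"
  shows "F (t + of_int k * T) = F t"
proof (induction k rule: int_induct[where k = 0])
  case base
  then show ?case by simp
next
  case (step1 i)
  then show ?case
    using assms[rule_format, of "t + of_int i * T"] by (simp add: algebra_simps)
next
  case (step2 i)
  then show ?case
    using assms[rule_format, of "t + of_int (i - 1) * T"] by (simp add: algebra_simps)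
qed

lemma range_periodic:
  fixes F :: "real \<Rightarrow> 'a"
  assumes "T > 0" and "\<forall>t. F (t + T) = F t"
  shows "range F = F ` {0..T}"
proof -
  have "F t \<in> F ` {0..T}" for t
  proof
    define k where "k = \<lfloor>t / T\<rfloor>"
    have "of_int k \<le> t / T" "t / T < of_int k + 1"
      unfolding k_def by (rule of_int_floor_le, rule real_of_int_floor_add_one_gt)
    then have "of_int k * T \<le> t" "t < (of_int k + 1) * T"
      using assms(1) by (simp_all add: field_simps)
    then show "t - of_int k * T \<in> {0..T}" by (simp add: algebra_simps)
    show "F t = F (t - of_int k * T)"
      using periodic_add_of_int[OF assms(2), of "t - of_int k * T" k] by simp
  qed
  then show ?thesis by blast
qed

lemma bounded_range_periodic:
  fixes F :: "real \<Rightarrow> 'a::metric_space"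
  assumes "T > 0" and "continuous_on UNIV F" and "\<forall>t. F (t + T) = F t"
  shows "bounded (range F)"
proof -
  have "compact (F ` {0..T})"
    using assms(2) by (intro compact_continuous_image) (auto intro: continuous_on_subset)
  then show ?thesis
    unfolding range_periodic[OF assms(1,3)] by (rule compact_imp_bounded)
qed

lemma frontier_sublevel_subset:
  fixes f :: "'a::topological_space \<Rightarrow> 'b::linorder_topology"
  assumes "continuous_on UNIV f"
  shows "frontier {z. f z \<le> c} \<subseteq> {z. f z = c}"
proof
  fix z assume z: "z \<in> frontier {z. f z \<le> c}"
  have "closed {z. f z \<le> c}"
    using assms by (intro closed_Collect_le continuous_intros)
  then have "f z \<le> c" using z frontier_subset_closed by blast
  moreover have "\<not> f z < c"
  proof
    assume "f z < c"
    moreover have "open {z. f z < c}"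
      using assms by (intro open_Collect_less continuous_intros)
    then have "{z. f z < c} \<subseteq> interior {z. f z \<le> c}"
      by (intro interior_maximal) auto
    ultimately show False using z by (auto simp: frontier_def)
  qed
  ultimately show "z \<in> {z. f z = c}" by simp
qed

lemma local_max_linear_has_vector_derivative_eq_0:
  fixes g :: "real \<Rightarrow> 'a::real_normed_vector" and L :: "'a \<Rightarrow> real"
  assumes "(g has_vector_derivative v) (at t)" and "bounded_linear L" and "0 < e"
    and "\<forall>s. \<bar>t - s\<bar> < e \<longrightarrow> L (g s) \<le> L (g t)"
  shows "L v = 0"
proof (rule DERIV_local_max[OF _ assms(3,4)])
  show "((\<lambda>s. L (g s)) has_real_derivative L v) (at t)"
    using bounded_linear.has_vector_derivative[OF assms(2,1)]
    by (simp add: has_real_derivative_iff_has_vector_derivative)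
qed

lemma Delta_edge_drift_eq:
  fixes b u :: real
  assumes "0 \<le> u" and "u < 1"
  shows "b * (b * (1 - u)) - (b * (1 - u))\<^sup>2 * u / (1 - u\<^sup>2) = b\<^sup>2 * (1 - u) / (1 + u)"
proof -
  have "1 - u\<^sup>2 = (1 - u) * (1 + u)" by (simp add: power2_eq_square algebra_simps)
  with assms have "1 - u\<^sup>2 \<noteq> 0" by simp
  with assms show ?thesis by (simp add: field_simps) (simp add: power2_eq_square algebra_simps)
qed

lemma Delta_edge_functional_vfield_nonzero:
  fixes \<sigma> \<tau> :: real
  assumes "G \<ge> 0" and "0 \<le> lam" and "lam \<le> 1" and "\<bar>F t\<bar> \<le> M"
    and "a < 1" and "\<bar>x\<bar> \<le> a" and "b * \<bar>x\<bar> + \<bar>p\<bar> = b" and "M < b\<^sup>2 * (1 - a) / (1 + a)"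
    and "\<bar>\<sigma>\<bar> = 1" and "\<sigma> * x = \<bar>x\<bar>" and "\<bar>\<tau>\<bar> = 1" and "\<tau> * p = \<bar>p\<bar>"
  shows "b * \<sigma> * fst (snd (vfield G F lam (t, x, p))) + \<tau> * snd (snd (vfield G F lam (t, x, p))) \<noteq> 0"
proof -
  define u where "u = \<bar>x\<bar>"
  define A where "A = b\<^sup>2 * (1 - u) / (1 + u) + G * sqrt (1 - u\<^sup>2) * u"
  define B where "B = lam * (1 - u\<^sup>2) * F t"
  have u: "0 \<le> u" "u \<le> a" "u < 1" using assms(5,6) by (simp_all add: u_def)
  have "\<sigma> * \<sigma> = 1" "\<tau> * \<tau> = 1"
    using assms(9,11) abs_mult_self_eq[of \<sigma>] abs_mult_self_eq[of \<tau>] by simp_all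
  then have "x = \<sigma> * (\<sigma> * x)" "p = \<tau> * (\<tau> * p)" by (metis mult.assoc mult_1)+
  moreover have abs_p: "\<bar>p\<bar> = b * (1 - u)" using assms(7) by (simp add: u_def algebra_simps)
  ultimately have x: "x = \<sigma> * u" and p: "p = \<tau> * (b * (1 - u))"
    using assms(10,12) by (simp_all add: u_def)
  have sq: "x\<^sup>2 = u\<^sup>2" "p\<^sup>2 = (b * (1 - u))\<^sup>2"
    by (simp add: u_def, simp flip: abs_p)
  have "b * \<sigma> * fst (snd (vfield G F lam (t, x, p))) + \<tau> * snd (snd (vfield G F lam (t, x, p)))
      = b * \<sigma> * p + \<tau> * ((G * sqrt (1 - u\<^sup>2) - (b * (1 - u))\<^sup>2 / (1 - u\<^sup>2)) * x - B)"
    by (simp add: vfield_def sq B_def)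
  also have "\<dots> = \<sigma> * \<tau> * (b * (b * (1 - u)) - (b * (1 - u))\<^sup>2 * u / (1 - u\<^sup>2)
        + G * sqrt (1 - u\<^sup>2) * u) - \<tau> * B"
    by (simp add: x p algebra_simps)
  also have "\<dots> = \<sigma> * \<tau> * A - \<tau> * B"
    by (simp add: A_def Delta_edge_drift_eq u)
  finally have functional: "b * \<sigma> * fst (snd (vfield G F lam (t, x, p)))
      + \<tau> * snd (snd (vfield G F lam (t, x, p))) = \<sigma> * \<tau> * A - \<tau> * B" .
  have "(1 - a) / (1 + a) \<le> (1 - u) / (1 + u)"
    using u by (simp add: field_simps)
  from mult_left_mono[OF this zero_le_power2[of b]]
  have "b\<^sup>2 * (1 - a) / (1 + a) \<le> b\<^sup>2 * (1 - u) / (1 + u)" by simp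
  moreover have "0 \<le> G * sqrt (1 - u\<^sup>2) * u"
    using assms(1) u by (simp add: abs_square_le_1)
  ultimately have "M < A" using assms(8) by (simp add: A_def)
  moreover have "\<bar>B\<bar> \<le> M"
  proof -
    have "0 \<le> 1 - u\<^sup>2" "1 - u\<^sup>2 \<le> 1" using u by (simp_all add: abs_square_le_1)
    then have "0 \<le> lam * (1 - u\<^sup>2)" "lam * (1 - u\<^sup>2) \<le> 1"
      using assms(2,3) by (simp_all add: mult_le_one)
    then have "\<bar>B\<bar> \<le> \<bar>F t\<bar>"
      by (simp add: B_def abs_mult mult_left_le_one_le)
    with assms(4) show ?thesis by simp
  qed
  ultimately have "\<bar>\<tau> * B\<bar> < \<bar>\<sigma> * \<tau> * A\<bar>"
    using assms(9,11) by (simp add: abs_mult)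
  then show ?thesis unfolding functional by linarith
qed

lemma solution_not_confined_at_Delta_edge:
  assumes "G \<ge> 0" and "0 \<le> lam" and "lam \<le> 1" and "\<forall>t. \<bar>F t\<bar> \<le> M"
    and "a < 1" and "M < b\<^sup>2 * (1 - a) / (1 + a)" and "0 < eps"
    and sol: "is_solution G F lam gamma {-eps<..<eps}"
    and stays: "\<forall>s\<in>{-eps<..<eps}. gamma s \<in> UNIV \<times> Delta_set b"
    and start: "gamma 0 = (t, x, p)" and "\<bar>x\<bar> \<le> a" and edge: "b * \<bar>x\<bar> + \<bar>p\<bar> = b"
  shows False
proof -
  \<comment> \<open>Not \<open>sgn x\<close>: at the vertex \<open>x = 0\<close> the functional \<open>\<tau> p\<close> alone may have zero derivative.\<close>
  define \<sigma> :: real where "\<sigma> = (if 0 \<le> x then 1 else -1)"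
  define \<tau> :: real where "\<tau> = (if 0 \<le> p then 1 else -1)"
  define L where "L w = b * \<sigma> * fst (snd w) + \<tau> * snd (snd w)" for w :: "real \<times> real \<times> real"
  have "0 \<le> b * (1 - \<bar>x\<bar>)" using edge by (simp add: algebra_simps)
  with \<open>\<bar>x\<bar> \<le> a\<close> \<open>a < 1\<close> have b: "0 \<le> b" by (simp add: zero_le_mult_iff)
  have signs: "\<bar>\<sigma>\<bar> = 1" "\<sigma> * x = \<bar>x\<bar>" "\<bar>\<tau>\<bar> = 1" "\<tau> * p = \<bar>p\<bar>"
    by (auto simp: \<sigma>_def \<tau>_def)
  have L_le: "L (gamma s) \<le> L (gamma 0)" if "\<bar>0 - s\<bar> < eps" for s
  proof -
    obtain t' x' p' where s: "gamma s = (t', x', p')" by (metis prod_cases3)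
    have "s \<in> {-eps<..<eps}" using that by (auto simp: abs_less_iff)
    with stays have "gamma s \<in> UNIV \<times> Delta_set b" by blast
    with s have "b * \<bar>x'\<bar> + \<bar>p'\<bar> \<le> b" by (simp add: Delta_set_def)
    moreover have "\<sigma> * x' \<le> \<bar>x'\<bar>" "\<tau> * p' \<le> \<bar>p'\<bar>"
      by (auto simp: \<sigma>_def \<tau>_def)
    moreover note mult_left_mono[OF this(1) b]
    moreover have "L (gamma 0) = b"
      using edge signs by (simp add: L_def start mult.assoc)
    ultimately show ?thesis by (simp add: L_def s mult.assoc)
  qed
  have "(gamma has_vector_derivative vfield G F lam (t, x, p)) (at 0)"
    using sol \<open>0 < eps\<close> unfolding is_solution_def start[symmetric] by simp
  moreover have "bounded_linear L"
    unfolding L_def by (intro bounded_linear_intros)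
  ultimately have "L (vfield G F lam (t, x, p)) = 0"
    using L_le \<open>0 < eps\<close> by (intro local_max_linear_has_vector_derivative_eq_0) auto
  moreover have "L (vfield G F lam (t, x, p)) \<noteq> 0"
    unfolding L_def
    by (rule Delta_edge_functional_vfield_nonzero) (use assms(1-6) \<open>\<bar>x\<bar> \<le> a\<close> edge signs in auto)
  ultimately show False by simp
qed

lemma bound_set_Gamma_Int_Delta:
  assumes "G \<ge> 0" and "0 \<le> lam" and "lam \<le> 1" and "\<forall>t. \<bar>F t\<bar> \<le> M"
    and "a < 1" and "M < b\<^sup>2 * (1 - a) / (1 + a)"
    and Gamma: "bound_set G F lam (UNIV \<times> Gamma_set a)"
  shows "bound_set G F lam (UNIV \<times> (Gamma_set a \<inter> Delta_set b))"
proof -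
  define D :: "(real \<times> real \<times> real) set" where "D = {z. b * \<bar>fst (snd z)\<bar> + \<bar>snd (snd z)\<bar> \<le> b}"
  define E :: "(real \<times> real \<times> real) set" where "E = UNIV \<times> (Gamma_set a \<inter> Delta_set b)"
  have E: "E = (UNIV \<times> Gamma_set a) \<inter> D"
    using assms(5) by (auto simp: E_def D_def Gamma_set_def Delta_set_def)
  have "closed (UNIV \<times> Gamma_set a)"
    unfolding Gamma_set_def by (simp add: closed_Times closed_Collect_le case_prod_unfold continuous_intros)
  moreover have "closed D"
    unfolding D_def by (intro closed_Collect_le continuous_intros)
  ultimately have "closed E" unfolding E by (rule closed_Int)
  have "E \<subseteq> UNIV \<times> Omega"
    by (auto simp: E_def Omega_def Delta_set_def)
  moreover have "\<not> (\<exists>z\<in>frontier E. \<exists>gamma. gamma 0 = z \<and>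
      is_solution G F lam gamma {-eps<..<eps} \<and> (\<forall>s\<in>{-eps<..<eps}. gamma s \<in> E))"
    if "0 < eps" for eps
  proof
    assume "\<exists>z\<in>frontier E. \<exists>gamma. gamma 0 = z \<and>
      is_solution G F lam gamma {-eps<..<eps} \<and> (\<forall>s\<in>{-eps<..<eps}. gamma s \<in> E)"
    then obtain gamma where "gamma 0 \<in> frontier E" and sol: "is_solution G F lam gamma {-eps<..<eps}"
      and stays: "\<forall>s\<in>{-eps<..<eps}. gamma s \<in> E"
      by blast
    then consider "gamma 0 \<in> frontier (UNIV \<times> Gamma_set a)" | "gamma 0 \<in> frontier D \<inter> E"
      using frontier_Int_subset \<open>closed E\<close> frontier_subset_closed unfolding E by blast
    then show False
    proof cases
      case 1
      with Gamma sol stays \<open>0 < eps\<close> show False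
        unfolding bound_set_def E by blast
    next
      case 2
      obtain t x p where start: "gamma 0 = (t, x, p)" by (metis prod_cases3)
      have "frontier D \<subseteq> {z. b * \<bar>fst (snd z)\<bar> + \<bar>snd (snd z)\<bar> = b}"
        unfolding D_def by (intro frontier_sublevel_subset continuous_intros)
      with 2 have "b * \<bar>x\<bar> + \<bar>p\<bar> = b" "\<bar>x\<bar> \<le> a"
        by (auto simp: start E Gamma_set_def)
      moreover have "\<forall>s\<in>{-eps<..<eps}. gamma s \<in> UNIV \<times> Delta_set b"
        using stays by (auto simp: E_def)
      ultimately show False
        using solution_not_confined_at_Delta_edge[OF assms(1-6) \<open>0 < eps\<close> sol _ start] by blast
    qed
  qed
  ultimately show ?thesis
    unfolding E_def[symmetric] bound_set_def using \<open>closed E\<close> closed_subset by blast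
qed

theorem lemma3p2:
  fixes G T a :: real and F :: "real \<Rightarrow> real"
  assumes "G > 0" and "T > 0"
    and "continuous_on UNIV F" and "\<forall>t. F (t + T) = F t"
    and "0 < a" and "a < 1"
    and "\<forall>lam\<in>{0..1}. bound_set G F lam (UNIV \<times> Gamma_set a)"
  shows "\<exists>b>0. \<forall>lam\<in>{0..1}. bound_set G F lam (UNIV \<times> (Gamma_set a \<inter> Delta_set b))"
proof -
  obtain M where M: "\<forall>t. \<bar>F t\<bar> \<le> M"
    using bounded_range_periodic[OF assms(2-4)] unfolding bounded_iff by auto
  define b where "b = sqrt ((\<bar>M\<bar> + 1) * (1 + a) / (1 - a))"
  have "b\<^sup>2 * (1 - a) / (1 + a) = \<bar>M\<bar> + 1"
    using assms(5,6) by (simp add: b_def)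
  then have "M < b\<^sup>2 * (1 - a) / (1 + a)" by simp
  moreover have "b > 0"
    using assms(5,6) by (simp add: b_def)
  ultimately show ?thesis
    using assms(1,6,7) M by (intro exI[of _ b]) (auto intro: bound_set_Gamma_Int_Delta)
qed

end
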